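(* Let $r\in\mathbb N$, $n\ge r$, and let $a_1,\dots,a_n\in[0,1]$ satisfy $\sum_{j=1}^na_j=1$ and $\sum_{j=1}^na_j^2\le(2^r r!)^{-1}$. Then, with $\epsilon:=(2\,r!)^{-1}$, $$\prod_{j=1}^n(1+a_jx^2)\ge\epsilon\,x^{2r}\qquad\text{for every }x>0 .$$ Consequently, for any $\lambda>0$, $q>0$, setting $\Psi(\rho):=\prod_{j=1}^n\big(\lambda^2/(\lambda^2+\rho^2a_j)\big)^q$, one has $$\int_x^{+\infty}\Psi^s(\rho)\rho^m\,d\rho\le\frac{1}{2rqs-m-1}\Big(\frac{\lambda^{2r}}{\epsilon}\Big)^{qs}x^{-2rqs+m+1}$$ for every $x>0$, $s>0$ and $m<2rqs-1$.
   Context: In the paper this is applied with $a_j=\pi_{j,\nu}^2$ (nonnegative numbers summing to one), on the event where $\nu>r$ and $\sum_j\pi_{j,\nu}^4<(2^rr!)^{-1}$. *)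

theory Defs
  imports "HOL-Analysis.Analysis"
begin

definition Psi :: "(nat \<Rightarrow> real) \<Rightarrow> nat \<Rightarrow> real \<Rightarrow> real \<Rightarrow> real \<Rightarrow> real" where
  "Psi a n lam q \<rho> = (\<Prod>j=1..n. (lam^2 / (lam^2 + \<rho>^2 * a j)) powr q)"

end

theory Submission
  imports Defs
begin

text \<open>
  Write \<open>e_k\<close> for the elementary symmetric polynomials of \<open>a_1,\<dots>,a_n\<close> and
  \<open>p_2 = \<Sum>a_j^2\<close>.  Expanding the product, \<open>\<Prod>(1 + a_j t) \<ge> e_r t^r\<close> for \<open>t \<ge> 0\<close>.
  Newton-type inequalities \<open>(k+1) e_{k+1} \<le> e_1 e_k\<close> and
  \<open>(k+2) e_{k+2} \<ge> e_1 e_{k+1} - p_2 e_k\<close>, iterated with \<open>e_1 = 1\<close>, give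
  \<open>r! e_r \<ge> 1 - p_2 r(r-1)/2 \<ge> 1/2\<close>; this is the first claim with \<open>t = x^2\<close>
  and \<open>\<epsilon> = 1/(2 r!)\<close>.

  For the second claim, \<open>\<Psi>(\<rho>)^s = \<Prod>(1 + a_j (\<rho>/\<lambda>)^2)^{-qs}\<close>, so the first claim yields
  the pointwise bound \<open>\<Psi>(\<rho>)^s \<rho>^m \<le> (\<lambda>^{2r}/\<epsilon>)^{qs} \<rho>^{m - 2rqs}\<close>; comparing with the
  integrable tail \<open>\<integral>_x^\<infinity> \<rho>^e d\<rho> = x^{e+1}/(-e-1)\<close> (\<open>e < -1\<close>) gives the estimate.
\<close>

fun esym :: "(nat \<Rightarrow> real) \<Rightarrow> nat \<Rightarrow> nat \<Rightarrow> real" where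
  "esym a 0 m = 1"
| "esym a (Suc k) 0 = 0"
| "esym a (Suc k) (Suc m) = esym a (Suc k) m + a (Suc m) * esym a k m"

lemma esym_one: "esym a 1 m = (\<Sum>j=1..m. a j)"
  by (induction m) auto

lemma esym_nonneg:
  assumes "\<And>j. j \<in> {1..m} \<Longrightarrow> 0 \<le> a j"
  shows "0 \<le> esym a k m"
  using assms
proof (induction a k m rule: esym.induct)
  case (3 a k m)
  then show ?case by (simp add: add_nonneg_nonneg)
qed auto

lemma esym_upper:
  assumes "\<And>j. j \<in> {1..m} \<Longrightarrow> 0 \<le> a j"
  shows "real (Suc k) * esym a (Suc k) m \<le> (\<Sum>j=1..m. a j) * esym a k m"
  using assms
proof (induction m arbitrary: k)
  case 0
  then show ?case by simp
next
  case (Suc m k)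
  define S where "S = (\<Sum>j=1..m. a j)"
  define \<alpha> where "\<alpha> = a (Suc m)"
  have \<alpha>: "0 \<le> \<alpha>" using Suc.prems by (simp add: \<alpha>_def)
  have IH: "\<And>k. real (Suc k) * esym a (Suc k) m \<le> S * esym a k m"
    using Suc by (simp add: S_def)
  have SS: "(\<Sum>j=1..Suc m. a j) = S + \<alpha>" by (simp add: S_def \<alpha>_def)
  show ?case
  proof (cases k)
    case 0
    have "esym a 1 (Suc m) = S + \<alpha>" by (simp only: esym_one SS)
    then show ?thesis using 0 SS by simp
  next
    case (Suc i)
    have nn: "0 \<le> esym a i m" using Suc.prems by (intro esym_nonneg) auto
    have "real (Suc k) * esym a (Suc k) (Suc m)
        = real (Suc k) * esym a (Suc k) m + \<alpha> * (real (Suc i) * esym a k m + esym a k m)"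
      using Suc by (simp add: \<alpha>_def algebra_simps)
    also have "\<dots> \<le> S * esym a k m + \<alpha> * (S * esym a i m + esym a k m)"
      using IH[of k] IH[of i] \<alpha> Suc by (intro add_mono mult_left_mono) auto
    also have "\<dots> \<le> (S + \<alpha>) * (esym a k m + \<alpha> * esym a i m)"
      using \<alpha> nn by (simp add: algebra_simps)
    also have "\<dots> = (\<Sum>j=1..Suc m. a j) * esym a k (Suc m)"
      unfolding SS using Suc by (simp add: \<alpha>_def)
    finally show ?thesis .
  qed
qed

text \<open>Newton-type lower bound \<open>(k+2) e_{k+2} \<ge> e_1 e_{k+1} - p_2 e_k\<close>, where \<open>p_2\<close> is
  the sum of squares: the terms of \<open>e_1 e_{k+1}\<close> with a repeated index are
  accounted for by \<open>p_2 e_k\<close>.\<close>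
lemma esym_lower:
  assumes "\<And>j. j \<in> {1..m} \<Longrightarrow> 0 \<le> a j"
  shows "(\<Sum>j=1..m. a j) * esym a (Suc k) m - (\<Sum>j=1..m. (a j)^2) * esym a k m
           \<le> real (Suc (Suc k)) * esym a (Suc (Suc k)) m"
  using assms
proof (induction m arbitrary: k)
  case 0
  then show ?case by simp
next
  case (Suc m k)
  define S where "S = (\<Sum>j=1..m. a j)"
  define P where "P = (\<Sum>j=1..m. (a j)^2)"
  define \<alpha> where "\<alpha> = a (Suc m)"
  have \<alpha>: "0 \<le> \<alpha>" using Suc.prems by (simp add: \<alpha>_def)
  have IH: "\<And>k. S * esym a (Suc k) m - P * esym a k m \<le> real (Suc (Suc k)) * esym a (Suc (Suc k)) m"
    using Suc by (simp add: S_def P_def)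
  have SS: "(\<Sum>j=1..Suc m. a j) = S + \<alpha>" by (simp add: S_def \<alpha>_def)
  have PP: "(\<Sum>j=1..Suc m. (a j)^2) = P + \<alpha>^2" by (simp add: P_def \<alpha>_def)
  have step: "real (Suc (Suc k)) * esym a (Suc (Suc k)) (Suc m)
      = real (Suc (Suc k)) * esym a (Suc (Suc k)) m
        + \<alpha> * (real (Suc k) * esym a (Suc k) m) + \<alpha> * esym a (Suc k) m"
    by (simp add: \<alpha>_def algebra_simps)
  show ?case
  proof (cases k)
    case 0
    have e1: "esym a 1 m = S" by (simp only: esym_one S_def)
    have "(S + \<alpha>) * esym a 1 (Suc m) - (P + \<alpha>^2) * esym a 0 (Suc m)
        = (S * esym a 1 m - P * esym a 0 m) + \<alpha> * esym a 1 m + \<alpha> * esym a 1 m"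
      using e1 by (simp add: \<alpha>_def algebra_simps power2_eq_square)
    also have "\<dots> \<le> real (Suc (Suc k)) * esym a (Suc (Suc k)) (Suc m)"
      unfolding step using IH[of 0] 0 by simp
    finally show ?thesis unfolding SS PP using 0 by simp
  next
    case (Suc i)
    have nn: "0 \<le> esym a i m" using Suc.prems by (intro esym_nonneg) auto
    have "(S + \<alpha>) * esym a (Suc k) (Suc m) - (P + \<alpha>^2) * esym a k (Suc m)
        = (S * esym a (Suc k) m - P * esym a k m) + \<alpha> * (S * esym a k m - P * esym a i m)
          + \<alpha> * esym a (Suc k) m - \<alpha>^3 * esym a i m"
      using Suc by (simp add: \<alpha>_def algebra_simps power2_eq_square power3_eq_cube)
    also have "\<dots> \<le> (S * esym a (Suc k) m - P * esym a k m) + \<alpha> * (S * esym a k m - P * esym a i m)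
          + \<alpha> * esym a (Suc k) m"
      using \<alpha> nn by simp
    also have "\<dots> \<le> real (Suc (Suc k)) * esym a (Suc (Suc k)) (Suc m)"
      unfolding step using IH[of k] IH[of i] \<alpha> Suc by (intro add_mono mult_left_mono) auto
    finally show ?thesis unfolding SS PP .
  qed
qed

lemma esym_fact_upper:
  assumes "\<And>j. j \<in> {1..m} \<Longrightarrow> 0 \<le> a j" and "(\<Sum>j=1..m. a j) = 1"
  shows "fact k * esym a k m \<le> 1"
proof (induction k)
  case 0
  then show ?case by simp
next
  case (Suc k)
  have "fact (Suc k) * esym a (Suc k) m = fact k * (real (Suc k) * esym a (Suc k) m)"
    by (simp add: algebra_simps)
  also have "\<dots> \<le> fact k * esym a k m"
    using esym_upper[of m a k] assms by (intro mult_left_mono) auto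
  finally show ?case using Suc.IH by linarith
qed

lemma esym_fact_lower:
  assumes nonneg: "\<And>j. j \<in> {1..m} \<Longrightarrow> 0 \<le> a j" and sum1: "(\<Sum>j=1..m. a j) = 1"
  shows "1 - (\<Sum>j=1..m. (a j)^2) * (real k * (real k - 1) / 2) \<le> fact k * esym a k m"
proof (induction k)
  case 0
  then show ?case by simp
next
  case (Suc k)
  define P where "P = (\<Sum>j=1..m. (a j)^2)"
  have P: "0 \<le> P" unfolding P_def by (intro sum_nonneg) auto
  show ?case
  proof (cases k)
    case 0
    then show ?thesis using esym_one[of a m] sum1 by simp
  next
    case (Suc i)
    have newton: "esym a k m - P * esym a i m \<le> real (Suc k) * esym a (Suc k) m"
      using esym_lower[of m a i] nonneg sum1 Suc by (simp add: P_def)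
    have "fact i * esym a i m \<le> 1" by (rule esym_fact_upper[OF nonneg sum1])
    then have bound_i: "P * (real k * (fact i * esym a i m)) \<le> P * real k"
      using P by (intro mult_left_mono) (auto simp: mult_left_le)
    have "1 - P * (real (Suc k) * (real (Suc k) - 1) / 2)
        = (1 - P * (real k * (real k - 1) / 2)) - P * real k"
      by (simp add: algebra_simps add_divide_distrib diff_divide_distrib)
    also have "\<dots> \<le> fact k * esym a k m - P * (real k * (fact i * esym a i m))"
      using Suc.IH bound_i by (simp add: P_def)
    also have "\<dots> = fact k * (esym a k m - P * esym a i m)"
      using Suc by (simp add: algebra_simps)
    also have "\<dots> \<le> fact k * (real (Suc k) * esym a (Suc k) m)"
      using newton by (intro mult_left_mono) auto
    also have "\<dots> = fact (Suc k) * esym a (Suc k) m"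
      by (simp add: algebra_simps)
    finally show ?thesis by (simp add: P_def)
  qed
qed

text \<open>For \<open>t \<ge> 0\<close> every term \<open>e_k t^k\<close> of the expansion
  \<open>\<Prod>(1 + a_j t) = \<Sum>_k e_k t^k\<close> is bounded by the product.\<close>
lemma esym_le_prod:
  assumes "\<And>j. j \<in> {1..m} \<Longrightarrow> 0 \<le> a j" and t: "0 \<le> t"
  shows "esym a k m * t^k \<le> (\<Prod>j=1..m. 1 + a j * t)"
  using assms(1)
proof (induction m arbitrary: k)
  case 0
  then show ?case by (cases k) auto
next
  case (Suc m k)
  define Q where "Q = (\<Prod>j=1..m. 1 + a j * t)"
  define \<alpha> where "\<alpha> = a (Suc m)"
  have \<alpha>: "0 \<le> \<alpha>" using Suc.prems by (simp add: \<alpha>_def)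
  have IH: "\<And>k. esym a k m * t^k \<le> Q" using Suc by (simp add: Q_def)
  have prod_Suc: "(\<Prod>j=1..Suc m. 1 + a j * t) = Q + \<alpha> * (t * Q)"
    by (simp add: Q_def \<alpha>_def algebra_simps)
  show ?case
  proof (cases k)
    case 0
    have "1 \<le> Q" using IH[of 0] by simp
    moreover have "0 \<le> \<alpha> * (t * Q)" using \<alpha> t \<open>1 \<le> Q\<close> by simp
    ultimately show ?thesis using 0 prod_Suc by simp
  next
    case (Suc i)
    have "esym a k (Suc m) * t^k = esym a k m * t^k + \<alpha> * (t * (esym a i m * t^i))"
      using Suc by (simp add: \<alpha>_def algebra_simps)
    also have "\<dots> \<le> Q + \<alpha> * (t * Q)"
      using IH[of k] IH[of i] \<alpha> t by (intro add_mono mult_left_mono) auto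
    finally show ?thesis using prod_Suc by simp
  qed
qed

text \<open>Under the smallness hypothesis \<open>p_2 \<le> 1/(2^r r!)\<close> the correction term is at most
  \<open>1/2\<close>, hence \<open>e_r \<ge> 1/(2 r!)\<close>.\<close>
lemma esym_lower_bound:
  assumes nonneg: "\<And>j. j \<in> {1..m} \<Longrightarrow> 0 \<le> a j" and sum1: "(\<Sum>j=1..m. a j) = 1"
    and small: "(\<Sum>j=1..m. (a j)^2) \<le> 1 / (2^r * fact r)"
  shows "1 / (2 * fact r) \<le> esym a r m"
proof -
  define P where "P = (\<Sum>j=1..m. (a j)^2)"
  have P: "0 \<le> P" unfolding P_def by (intro sum_nonneg) auto
  have "real r * (real r - 1) \<le> 2^r * fact r"
  proof (cases r)
    case (Suc i)
    have "r \<le> 2^r" using less_exp[of r] by simp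
    then have "real r \<le> 2^r" by (metis of_nat_le_iff of_nat_numeral of_nat_power)
    moreover have "real r \<le> fact r" using fact_ge_self[of r] by (metis of_nat_fact of_nat_le_iff)
    then have "real r - 1 \<le> fact r" by linarith
    ultimately show ?thesis using Suc by (intro mult_mono) auto
  qed simp
  then have "P * (real r * (real r - 1)) \<le> P * (2^r * fact r)"
    using P by (rule mult_left_mono)
  also have "\<dots> \<le> 1"
    using small by (simp add: P_def field_simps)
  finally have "P * (real r * (real r - 1) / 2) \<le> 1 / 2" by simp
  then have "1 / 2 \<le> fact r * esym a r m"
    using esym_fact_lower[OF nonneg sum1, of r] by (simp add: P_def)
  then show ?thesis by (simp add: field_simps)
qed

lemma prod_lower_bound:
  fixes a :: "nat \<Rightarrow> real"
  assumes "\<And>j. j \<in> {1..n} \<Longrightarrow> 0 \<le> a j" and "(\<Sum>j=1..n. a j) = 1"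
    and "(\<Sum>j=1..n. (a j)^2) \<le> 1 / (2^r * fact r)" and "0 \<le> t"
  shows "(1 / (2 * fact r)) * t^r \<le> (\<Prod>j=1..n. 1 + a j * t)"
proof -
  have "(1 / (2 * fact r)) * t^r \<le> esym a r n * t^r"
    using esym_lower_bound[OF assms(1-3)] assms(4) by (intro mult_right_mono) auto
  also have "\<dots> \<le> (\<Prod>j=1..n. 1 + a j * t)"
    using esym_le_prod[OF assms(1,4)] .
  finally show ?thesis .
qed

lemma Psi_eq_prod_powr:
  assumes "\<And>j. j \<in> {1..n} \<Longrightarrow> 0 \<le> a j" and "lam > 0"
  shows "Psi a n lam q \<rho> = (\<Prod>j=1..n. 1 + a j * (\<rho> / lam)^2) powr (- q)"
proof -
  have factor: "lam^2 / (lam^2 + \<rho>^2 * a j) = 1 / (1 + a j * (\<rho> / lam)^2)" if "j \<in> {1..n}" for j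
  proof -
    have "lam^2 + \<rho>^2 * a j > 0" using assms that by (simp add: add_pos_nonneg)
    then show ?thesis using assms by (simp add: field_simps power_divide)
  qed
  have "Psi a n lam q \<rho> = (\<Prod>j=1..n. (1 / (1 + a j * (\<rho> / lam)^2)) powr q)"
    unfolding Psi_def by (intro prod.cong) (auto simp: factor)
  also have "\<dots> = (1 / (\<Prod>j=1..n. 1 + a j * (\<rho> / lam)^2)) powr q"
    by (simp add: prod_powr_distrib[symmetric] prod_dividef)
  also have "\<dots> = (\<Prod>j=1..n. 1 + a j * (\<rho> / lam)^2) powr (- q)"
    by (simp add: powr_minus_divide powr_divide)
  finally show ?thesis .
qed

lemma powr_le_inverse_power_bound:
  fixes eps lam \<rho> P e :: real and r :: nat
  assumes "0 < eps" "0 < lam" "0 < \<rho>" "e \<ge> 0"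
    and "eps * (\<rho> / lam)^(2*r) \<le> P"
  shows "P powr (- e) \<le> (lam^(2*r) / eps) powr e * \<rho> powr (- (2 * real r * e))"
proof -
  have pos: "0 < eps * (\<rho> / lam)^(2*r)" using assms by simp
  have "P powr (- e) \<le> (eps * (\<rho> / lam)^(2*r)) powr (- e)"
    using assms pos by (intro powr_mono2') auto
  also have "eps * (\<rho> / lam)^(2*r) = \<rho> powr (2 * real r) / (lam^(2*r) / eps)"
    using assms by (simp add: power_divide powr_realpow[symmetric] field_simps)
  also have "(\<rho> powr (2 * real r) / (lam^(2*r) / eps)) powr (- e)
      = (lam^(2*r) / eps) powr e * \<rho> powr (- (2 * real r * e))"
  proof -
    have "(\<rho> powr (2 * real r) / (lam^(2*r) / eps)) powr (- e)
        = ((lam^(2*r) / eps) / \<rho> powr (2 * real r)) powr e"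
      using assms by (simp add: powr_minus_divide powr_divide mult.commute)
    also have "\<dots> = (lam^(2*r) / eps) powr e / (\<rho> powr (2 * real r)) powr e"
      by (rule powr_divide)
    also have "(\<rho> powr (2 * real r)) powr e = \<rho> powr (2 * real r * e)"
      by (rule powr_powr)
    finally show ?thesis by (simp add: powr_minus_divide)
  qed
  finally show ?thesis .
qed

lemma Psi_powr_bound:
  assumes nonneg: "\<And>j. j \<in> {1..n} \<Longrightarrow> 0 \<le> a j" and "(\<Sum>j=1..n. a j) = 1"
    and "(\<Sum>j=1..n. (a j)^2) \<le> 1 / (2^r * fact r)"
    and "0 < lam" "0 < q" "0 < s" "0 < \<rho>"
  shows "Psi a n lam q \<rho> powr s * \<rho> powr m
           \<le> (lam^(2*r) / (1 / (2 * fact r))) powr (q * s) * \<rho> powr (m - 2 * real r * q * s)"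
proof -
  define P where "P = (\<Prod>j=1..n. 1 + a j * (\<rho> / lam)^2)"
  define C where "C = (lam^(2*r) / (1 / (2 * fact r))) powr (q * s)"
  have "(1 / (2 * fact r)) * (\<rho> / lam)^(2*r) \<le> P"
    using prod_lower_bound[OF assms(1-3), of "(\<rho> / lam)^2"] by (simp add: P_def power_mult)
  then have "P powr (- (q * s)) \<le> C * \<rho> powr (- (2 * real r * (q * s)))"
    unfolding C_def using assms by (intro powr_le_inverse_power_bound) auto
  moreover have "Psi a n lam q \<rho> powr s = P powr (- (q * s))"
    using Psi_eq_prod_powr[OF nonneg \<open>0 < lam\<close>] by (simp add: P_def powr_powr)
  ultimately have "Psi a n lam q \<rho> powr s * \<rho> powr m \<le> C * \<rho> powr (- (2 * real r * (q * s))) * \<rho> powr m"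
    by (simp add: mult_right_mono)
  also have "\<dots> = C * \<rho> powr (m - 2 * real r * q * s)"
    by (simp add: mult.assoc powr_add[symmetric])
  finally show ?thesis unfolding C_def .
qed

lemma powr_tail_integral:
  fixes x e :: real
  assumes "e < -1" "0 < x"
  shows "set_integrable lborel {x..} (\<lambda>\<rho>. \<rho> powr e)"
    and "(LINT \<rho>:{x..}|lborel. \<rho> powr e) = x powr (e + 1) / (- e - 1)"
proof -
  have hi: "((\<lambda>\<rho>. \<rho> powr e) has_integral -(x powr (e + 1)) / (e + 1)) {x..}"
    by (rule has_integral_powr_to_inf[OF assms])
  then have "(\<lambda>\<rho>. \<rho> powr e) absolutely_integrable_on {x..}"
    by (intro nonnegative_absolutely_integrable_1) (auto simp: integrable_on_def)
  then have "integrable lebesgue (\<lambda>\<rho>. indicator {x..} \<rho> *\<^sub>R \<rho> powr e)"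
    by (simp add: set_integrable_def)
  moreover have "(\<lambda>\<rho>::real. indicator {x..} \<rho> *\<^sub>R \<rho> powr e) \<in> borel_measurable lborel"
    by measurable
  ultimately show integrable: "set_integrable lborel {x..} (\<lambda>\<rho>. \<rho> powr e)"
    unfolding set_integrable_def using integrable_completion by blast
  have "e + 1 \<noteq> 0" "- e - 1 \<noteq> 0" using assms(1) by auto
  then have "-(x powr (e + 1)) / (e + 1) = x powr (e + 1) / (- e - 1)"
    by (simp add: field_simps)
  then show "(LINT \<rho>:{x..}|lborel. \<rho> powr e) = x powr (e + 1) / (- e - 1)"
    using set_borel_integral_eq_integral(2)[OF integrable] hi by (simp add: integral_unique)
qed

lemma set_integral_le_powr_tail:
  fixes f :: "real \<Rightarrow> real" and x e C :: real
  assumes "e < -1" "0 < x" and meas: "set_borel_measurable lborel {x..} f"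
    and bound: "\<And>\<rho>. x \<le> \<rho> \<Longrightarrow> 0 \<le> f \<rho> \<and> f \<rho> \<le> C * \<rho> powr e"
  shows "set_integrable lborel {x..} f"
    and "(LINT \<rho>:{x..}|lborel. f \<rho>) \<le> C * (x powr (e + 1) / (- e - 1))"
proof -
  have majorant: "set_integrable lborel {x..} (\<lambda>\<rho>. C * \<rho> powr e)"
    using powr_tail_integral(1)[OF assms(1,2)] by (rule set_integrable_mult_right)
  show integrable: "set_integrable lborel {x..} f"
  proof (rule set_integrable_bound[OF majorant meas])
    show "AE \<rho> in lborel. \<rho> \<in> {x..} \<longrightarrow> norm (f \<rho>) \<le> norm (C * \<rho> powr e)"
      using bound by (intro AE_I2) fastforce
  qed
  have "(LINT \<rho>:{x..}|lborel. f \<rho>) \<le> (LINT \<rho>:{x..}|lborel. C * \<rho> powr e)"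
    using integrable majorant bound by (intro set_integral_mono) auto
  also have "\<dots> = C * (x powr (e + 1) / (- e - 1))"
    using powr_tail_integral(2)[OF assms(1,2)] by (simp add: set_integral_mult_right)
  finally show "(LINT \<rho>:{x..}|lborel. f \<rho>) \<le> C * (x powr (e + 1) / (- e - 1))" .
qed

theorem proposition2p6:
  fixes r n :: nat and a :: "nat \<Rightarrow> real"
  assumes "n \<ge> r"
    and "\<And>j. j \<in> {1..n} \<Longrightarrow> 0 \<le> a j \<and> a j \<le> 1"
    and "(\<Sum>j=1..n. a j) = 1"
    and "(\<Sum>j=1..n. (a j)^2) \<le> 1 / (2^r * fact r)"
  shows "(\<forall>x::real. x > 0 \<longrightarrow>
            (\<Prod>j=1..n. 1 + a j * x^2) \<ge> (1 / (2 * fact r)) * x^(2*r))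
       \<and> (\<forall>lam q x s m :: real. lam > 0 \<longrightarrow> q > 0 \<longrightarrow> x > 0 \<longrightarrow> s > 0 \<longrightarrow>
            m < 2 * real r * q * s - 1 \<longrightarrow>
            set_integrable lborel {x..} (\<lambda>\<rho>. Psi a n lam q \<rho> powr s * \<rho> powr m)
          \<and> (LINT \<rho>:{x..}|lborel. Psi a n lam q \<rho> powr s * \<rho> powr m)
              \<le> 1 / (2 * real r * q * s - m - 1)
                 * (lam^(2*r) / (1 / (2 * fact r))) powr (q * s)
                 * x powr (- 2 * real r * q * s + m + 1))"
proof -
  have nonneg: "\<And>j. j \<in> {1..n} \<Longrightarrow> 0 \<le> a j" using assms(2) by blast
  note hyps = nonneg assms(3,4)
  show ?thesis
  proof (intro conjI allI impI)
    fix x :: real assume "x > 0"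
    then show "(\<Prod>j=1..n. 1 + a j * x^2) \<ge> (1 / (2 * fact r)) * x^(2*r)"
      using prod_lower_bound[OF hyps, of "x^2"] by (simp add: power_mult)
  next
    fix lam q x s m :: real
    assume "lam > 0" "q > 0" "x > 0" "s > 0" "m < 2 * real r * q * s - 1"
    define C where "C = (lam^(2*r) / (1 / (2 * fact r))) powr (q * s)"
    define e where "e = m - 2 * real r * q * s"
    have "e < -1" using \<open>m < _\<close> by (simp add: e_def)
    have bound: "0 \<le> Psi a n lam q \<rho> powr s * \<rho> powr m
        \<and> Psi a n lam q \<rho> powr s * \<rho> powr m \<le> C * \<rho> powr e" if "x \<le> \<rho>" for \<rho>
      using Psi_powr_bound[OF hyps, of lam q s \<rho> m] \<open>lam > 0\<close> \<open>q > 0\<close> \<open>s > 0\<close> \<open>x > 0\<close> that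
      by (simp add: C_def e_def)
    have meas: "set_borel_measurable lborel {x..} (\<lambda>\<rho>. Psi a n lam q \<rho> powr s * \<rho> powr m)"
      unfolding set_borel_measurable_def Psi_def by measurable
    note tail = set_integral_le_powr_tail[OF \<open>e < -1\<close> \<open>x > 0\<close> meas bound]
    show "set_integrable lborel {x..} (\<lambda>\<rho>. Psi a n lam q \<rho> powr s * \<rho> powr m)"
      by (rule tail(1))
    have exponents: "e + 1 = - 2 * real r * q * s + m + 1" "- e - 1 = 2 * real r * q * s - m - 1"
      by (simp_all add: e_def)
    have "C * (x powr (e + 1) / (- e - 1))
        = 1 / (2 * real r * q * s - m - 1) * C * x powr (- 2 * real r * q * s + m + 1)"
      unfolding exponents by (simp add: divide_inverse mult_ac)
    then show "(LINT \<rho>:{x..}|lborel. Psi a n lam q \<rho> powr s * \<rho> powr m)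
            \<le> 1 / (2 * real r * q * s - m - 1) * (lam^(2*r) / (1 / (2 * fact r))) powr (q * s)
               * x powr (- 2 * real r * q * s + m + 1)"
      using tail(2) by (simp only: C_def)
  qed
qed

end
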